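(* Let $H=(\mathcal{V},\mathcal{E})$ be the hypergraph representation of $\{\mathcal{I}_j\}$. Then $H$ is connected if and only if $\mathsf{M}^\star(\{\mathcal{I}_j\})<\left|\bigcup_j\mathcal{I}_j\right|$. Moreover, $\{\mathcal{I}_j\}$ is $1$-critical if and only if $\mathcal{E}$ is a minimal connected dominating edge set of $H$.
   Context: $\{\mathcal{I}_j\}=(\mathcal{I}_1,\dots,\mathcal{I}_n)$ is a family of finite sets (message indices held by clients $c_1,\dots,c_n$). $\mathsf{M}^\star(\{\mathcal{I}_j\})$ is the optimal value of: minimize $\sum_{j\in[n]}a_j$ over $a\in\mathbb{Z}^n$ subject to $\sum_{j\in\mathcal{S}}a_j\ge\left|\bigcap_{j\in[n]\setminus\mathcal{S}}\bar{\mathcal{I}}_j\right|$ for every nonempty proper $\mathcal{S}\subsetneq[n]$, where $\bar{\mathcal{I}}_j=(\bigcup_i\mathcal{I}_i)\setminus\mathcal{I}_j$. A family $\{\mathcal{I}_j\}$ is $1$-critical if (i) $|\bigcup_j\mathcal{I}_j|-\mathsf{M}^\star(\{\mathcal{I}_j\})=1$ and (ii) $\mathsf{M}^\star(\{\mathcal{I}_j\setminus\{i\}\})=\mathsf{M}^\star(\{\mathcal{I}_j\})$ for all $i\in\bigcup_j\mathcal{I}_j$. The hypergraph representation of $\{\mathcal{I}_j\}$ is the hypergraph (repeated edges allowed) with vertex set $\mathcal{V}=\{c_1,\dots,c_n\}$ and one hyperedge for each message index $e\in\bigcup_j\mathcal{I}_j$, where $c_j\in e$ iff $e\in\mathcal{I}_j$.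 For a hypergraph $H=(\mathcal{V},\mathcal{E})$, an edge set $\mathcal{E}'\subseteq\mathcal{E}$ is a minimal connected dominating edge set if $(\mathcal{V},\mathcal{E}')$ is connected and removing any edge from $\mathcal{E}'$ makes it disconnected. *)

theory Defs
  imports Main
begin

text \<open>A family of message-index sets I 1, ..., I n (clients c_1..c_n are indices 1..n).\<close>

definition universe :: "(nat \<Rightarrow> 'a set) \<Rightarrow> nat \<Rightarrow> 'a set" where
  "universe I n = (\<Union>j\<in>{1..n}. I j)"

definition compl_set :: "(nat \<Rightarrow> 'a set) \<Rightarrow> nat \<Rightarrow> nat \<Rightarrow> 'a set" where
  "compl_set I n j = universe I n - I j"

definition feasible :: "(nat \<Rightarrow> 'a set) \<Rightarrow> nat \<Rightarrow> (nat \<Rightarrow> int) \<Rightarrow> bool" where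
  "feasible I n a \<longleftrightarrow>
     (\<forall>S. S \<subseteq> {1..n} \<and> S \<noteq> {} \<and> S \<noteq> {1..n} \<longrightarrow>
        (\<Sum>j\<in>S. a j) \<ge> int (card (\<Inter>j\<in>{1..n} - S. compl_set I n j)))"

definition Mstar :: "(nat \<Rightarrow> 'a set) \<Rightarrow> nat \<Rightarrow> int" where
  "Mstar I n = Inf {(\<Sum>j\<in>{1..n}. a j) | a. feasible I n a}"

definition one_critical :: "(nat \<Rightarrow> 'a set) \<Rightarrow> nat \<Rightarrow> bool" where
  "one_critical I n \<longleftrightarrow>
     int (card (universe I n)) - Mstar I n = 1 \<and>
     (\<forall>i\<in>universe I n. Mstar (\<lambda>j. I j - {i}) n = Mstar I n)"

text \<open>General hypergraph with vertex set V and hyperedges indexed by 'e, the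
  edge with index e having vertex set edge e. Connectivity of (V, E').\<close>
definition hg_connected :: "'v set \<Rightarrow> ('e \<Rightarrow> 'v set) \<Rightarrow> 'e set \<Rightarrow> bool" where
  "hg_connected V edge E' \<longleftrightarrow>
     (\<forall>u\<in>V. \<forall>w\<in>V. (u, w) \<in> {(x, y). x \<in> V \<and> y \<in> V \<and> (\<exists>e\<in>E'. x \<in> edge e \<and> y \<in> edge e)}\<^sup>*)"

definition min_conn_dom_edge_set :: "'v set \<Rightarrow> ('e \<Rightarrow> 'v set) \<Rightarrow> 'e set \<Rightarrow> 'e set \<Rightarrow> bool" where
  "min_conn_dom_edge_set V edge E E' \<longleftrightarrow>
     E' \<subseteq> E \<and> hg_connected V edge E' \<and> (\<forall>e\<in>E'. \<not> hg_connected V edge (E' - {e}))"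

text \<open>Hypergraph representation: vertices 1..n, one hyperedge per message index e
  in the universe, containing client j iff e is in I j.\<close>
definition rep_edge :: "(nat \<Rightarrow> 'a set) \<Rightarrow> nat \<Rightarrow> 'a \<Rightarrow> nat set" where
  "rep_edge I n e = {j \<in> {1..n}. e \<in> I j}"

end

theory Submission
  imports Defs
begin

text \<open>
  For a
  nonempty proper set S of clients, the constraint of the integer program M* for S reads
  a(S) >= #(messages held by nobody outside S), i.e. the number of hyperedges inside S.

  Part 1.  If H is disconnected, take a connected component C: every hyperedge lies
  inside C or inside its complement, so adding the constraints for C and for the
  complement gives a([n]) >= |U| for every feasible a, hence M* >= |U|.  If H is
  connected, we grow a connected set R of clients one vertex at a time, maintaining a
  "partial certificate" vector (charging each hyperedge to the first vertex of R it
  touches, minus one for the start vertex); for R = [n] this is a feasible vector of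
  total weight |U| - 1, hence M* < |U|.

  Part 2.  Removing a message i from all I_j removes the hyperedge i from H and can only
  decrease M*.  Applying Part 1 to the reduced family shows that H - i is disconnected
  iff M*(I - i) >= |U| - 1; combined with Part 1 for H this is exactly the equivalence
  between 1-criticality and minimal connectivity of the full edge set.
\<close>

definition hg_adj :: "'v set \<Rightarrow> ('e \<Rightarrow> 'v set) \<Rightarrow> 'e set \<Rightarrow> ('v \<times> 'v) set" where
  "hg_adj V edge E' = {(x, y). x \<in> V \<and> y \<in> V \<and> (\<exists>e\<in>E'. x \<in> edge e \<and> y \<in> edge e)}"

lemma hg_connected_adj:
  "hg_connected V edge E' \<longleftrightarrow> (\<forall>u\<in>V. \<forall>w\<in>V. (u, w) \<in> (hg_adj V edge E')\<^sup>*)"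
  unfolding hg_connected_def hg_adj_def ..

lemma path_leaves_set:
  assumes "(x, y) \<in> (hg_adj V edge E')\<^sup>*" "x \<in> C" "y \<notin> C"
  shows "\<exists>e\<in>E'. edge e \<inter> C \<noteq> {} \<and> \<not> edge e \<subseteq> C"
  using assms
proof (induction rule: rtrancl_induct)
  case base
  then show ?case by simp
next
  case (step z y)
  then show ?case
    by (cases "z \<in> C") (auto simp: hg_adj_def)
qed

lemma hg_connected_iff_crossing:
  assumes edges_in: "\<forall>e\<in>E'. edge e \<subseteq> V"
  shows "hg_connected V edge E' \<longleftrightarrow>
    (\<forall>C. C \<subseteq> V \<and> C \<noteq> {} \<and> C \<noteq> V \<longrightarrow> (\<exists>e\<in>E'. edge e \<inter> C \<noteq> {} \<and> \<not> edge e \<subseteq> C))"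
proof
  assume conn: "hg_connected V edge E'"
  show "\<forall>C. C \<subseteq> V \<and> C \<noteq> {} \<and> C \<noteq> V \<longrightarrow> (\<exists>e\<in>E'. edge e \<inter> C \<noteq> {} \<and> \<not> edge e \<subseteq> C)"
  proof (intro allI impI)
    fix C assume C: "C \<subseteq> V \<and> C \<noteq> {} \<and> C \<noteq> V"
    then obtain x y where xy: "x \<in> C" "y \<in> V" "y \<notin> C" by blast
    then have "(x, y) \<in> (hg_adj V edge E')\<^sup>*"
      using conn C unfolding hg_connected_adj by blast
    then show "\<exists>e\<in>E'. edge e \<inter> C \<noteq> {} \<and> \<not> edge e \<subseteq> C"
      using xy(1,3) by (rule path_leaves_set)
  qed
next
  assume cross: "\<forall>C. C \<subseteq> V \<and> C \<noteq> {} \<and> C \<noteq> V \<longrightarrow> (\<exists>e\<in>E'. edge e \<inter> C \<noteq> {} \<and> \<not> edge e \<subseteq> C)"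
  show "hg_connected V edge E'"
    unfolding hg_connected_adj
  proof (intro ballI, rule ccontr)
    fix u w assume "u \<in> V" "w \<in> V" "(u, w) \<notin> (hg_adj V edge E')\<^sup>*"
    define C where "C = {x \<in> V. (u, x) \<in> (hg_adj V edge E')\<^sup>*}"
    have "u \<in> C" "w \<notin> C" "C \<subseteq> V"
      using \<open>u \<in> V\<close> \<open>(u, w) \<notin> _\<close> unfolding C_def by auto
    then have "C \<subseteq> V \<and> C \<noteq> {} \<and> C \<noteq> V"
      using \<open>w \<in> V\<close> by blast
    then obtain e where "e \<in> E'" "edge e \<inter> C \<noteq> {}" "\<not> edge e \<subseteq> C"
      using cross by meson
    then obtain x y where e: "e \<in> E'" "x \<in> edge e" "x \<in> C" "y \<in> edge e" "y \<notin> C"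
      by blast
    have "(u, x) \<in> (hg_adj V edge E')\<^sup>*"
      using e(3) unfolding C_def by simp
    moreover have "(x, y) \<in> hg_adj V edge E'"
      using e(1,2,4) edges_in unfolding hg_adj_def by blast
    ultimately have "(u, y) \<in> (hg_adj V edge E')\<^sup>*"
      by (rule rtrancl_into_rtrancl)
    moreover have "y \<in> V"
      using e(1,4) edges_in by blast
    ultimately show False
      using e(5) unfolding C_def by simp
  qed
qed

definition reached :: "('e \<Rightarrow> 'v set) \<Rightarrow> 'e set \<Rightarrow> 'v set \<Rightarrow> 'e set" where
  "reached edge E' R = {e \<in> E'. edge e \<inter> R \<noteq> {}}"

definition confined :: "('e \<Rightarrow> 'v set) \<Rightarrow> 'e set \<Rightarrow> 'v set \<Rightarrow> 'v set \<Rightarrow> 'e set" where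
  "confined edge E' R S = {e \<in> reached edge E' R. edge e \<inter> R \<subseteq> S}"

text \<open>Invariant of the certificate construction.\<close>

definition partial_certificate ::
    "'v set \<Rightarrow> ('e \<Rightarrow> 'v set) \<Rightarrow> 'e set \<Rightarrow> 'v set \<Rightarrow> ('v \<Rightarrow> int) \<Rightarrow> bool" where
  "partial_certificate V edge E' R a \<longleftrightarrow> R \<subseteq> V \<and>
     sum a V = int (card (reached edge E' R)) - 1 \<and>
     (\<forall>S\<subseteq>V. int (card (confined edge E' R S)) - (if R \<subseteq> S then 1 else 0) \<le> sum a S)"

lemma partial_certificate_singleton:
  assumes "finite V" "v \<in> V"
  shows "partial_certificate V edge E' {v}
           (\<lambda>j. if j = v then int (card (reached edge E' {v})) - 1 else 0)"
proof -
  have sum_eq: "(\<Sum>j\<in>S. if j = v then int (card (reached edge E' {v})) - 1 else 0)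
      = (if v \<in> S then int (card (reached edge E' {v})) - 1 else 0)" if "finite S" for S
    using that by simp
  have "confined edge E' {v} S = (if v \<in> S then reached edge E' {v} else {})" for S
    unfolding confined_def reached_def by auto
  then show ?thesis
    using assms sum_eq finite_subset[OF _ \<open>finite V\<close>]
    unfolding partial_certificate_def by auto
qed

lemma card_reached_insert:
  assumes "finite E'"
  shows "int (card (reached edge E' (insert w R)))
       = int (card (reached edge E' R)) + int (card (reached edge E' (insert w R) - reached edge E' R))"
proof -
  have "reached edge E' R \<subseteq> reached edge E' (insert w R)"
    unfolding reached_def by blast
  then have "reached edge E' (insert w R)
      = reached edge E' R \<union> (reached edge E' (insert w R) - reached edge E' R)"
    by blast
  moreover have "finite (reached edge E' (insert w R))"
    using assms unfolding reached_def by simp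
  ultimately show ?thesis
    by (metis Diff_disjoint card_Un_disjoint finite_Un of_nat_add)
qed

lemma confined_insert_mem:
  assumes "w \<in> S"
  shows "confined edge E' (insert w R) S
       = confined edge E' R S \<union> (reached edge E' (insert w R) - reached edge E' R)"
  using assms unfolding confined_def reached_def by blast

text \<open>If w is outside S, no new edge is confined to S, and the bridging edge e0 from R to w
  stops being confined to S; it was confined before when R is inside S.  This lost edge pays
  for dropping the -1 correction.\<close>

lemma card_confined_insert_nonmem:
  assumes "finite E'" "w \<notin> S" "e0 \<in> E'" "w \<in> edge e0" "edge e0 \<inter> R \<noteq> {}"
  shows "card (confined edge E' (insert w R) S) + (if R \<subseteq> S then 1 else 0)
       \<le> card (confined edge E' R S)"
proof -
  have fin: "finite (confined edge E' R S)"
    using assms(1) unfolding confined_def reached_def by simp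
  have sub: "confined edge E' (insert w R) S \<subseteq> confined edge E' R S - {e0}"
    using assms(2,4) unfolding confined_def reached_def by blast
  have "card (confined edge E' (insert w R) S) \<le> card (confined edge E' R S - {e0})"
    using fin sub by (intro card_mono) auto
  moreover have "e0 \<in> confined edge E' R S" if "R \<subseteq> S"
    using that assms(3,5) unfolding confined_def reached_def by blast
  moreover have "card (confined edge E' R S - {e0}) \<le> card (confined edge E' R S)"
    using fin by (intro card_mono) auto
  ultimately show ?thesis
    using fin card_gt_0_iff[of "confined edge E' R S"]
    by (cases "R \<subseteq> S") (auto simp: card_Diff_singleton)
qed

lemma partial_certificate_extend:
  assumes fin: "finite V" "finite E'" and cert: "partial_certificate V edge E' R a"
    and w: "w \<in> V" "w \<notin> R" and e0: "e0 \<in> E'" "w \<in> edge e0" "edge e0 \<inter> R \<noteq> {}"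
  defines "d \<equiv> int (card (reached edge E' (insert w R) - reached edge E' R))"
  shows "partial_certificate V edge E' (insert w R) (\<lambda>j. a j + (if j = w then d else 0))"
proof -
  from cert have RV: "R \<subseteq> V"
    and sum_V: "sum a V = int (card (reached edge E' R)) - 1"
    and old: "\<And>S. S \<subseteq> V \<Longrightarrow>
                int (card (confined edge E' R S)) - (if R \<subseteq> S then 1 else 0) \<le> sum a S"
    unfolding partial_certificate_def by blast+
  have sum_eq: "(\<Sum>j\<in>S. a j + (if j = w then d else 0)) = sum a S + (if w \<in> S then d else 0)"
    if "finite S" for S
    using that by (simp add: sum.distrib)
  have bound: "int (card (confined edge E' (insert w R) S)) - (if insert w R \<subseteq> S then 1 else 0)
      \<le> sum a S + (if w \<in> S then d else 0)" if "S \<subseteq> V" for S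
  proof (cases "w \<in> S")
    case True
    have "int (card (confined edge E' (insert w R) S)) = int (card (confined edge E' R S)) + d"
      unfolding confined_insert_mem[OF True] d_def
      using fin(2) by (subst card_Un_disjoint) (auto simp: confined_def reached_def)
    then show ?thesis
      using old[OF that] True by simp
  next
    case False
    have "int (card (confined edge E' (insert w R) S)) + (if R \<subseteq> S then 1 else 0)
        \<le> int (card (confined edge E' R S))"
      using card_confined_insert_nonmem[of E' w S e0 edge R, OF fin(2) False e0]
      by (cases "R \<subseteq> S") simp_all
    then show ?thesis
      using old[OF that] False by simp
  qed
  show ?thesis
    unfolding partial_certificate_def
  proof (intro conjI allI impI)
    show "insert w R \<subseteq> V" using RV w(1) by simp
    show "(\<Sum>j\<in>V. a j + (if j = w then d else 0)) = int (card (reached edge E' (insert w R))) - 1"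
      using sum_eq[OF fin(1)] sum_V w(1) card_reached_insert[OF fin(2), of edge w R]
      unfolding d_def by simp
    fix S assume "S \<subseteq> V"
    then show "int (card (confined edge E' (insert w R) S)) - (if insert w R \<subseteq> S then 1 else 0)
        \<le> (\<Sum>j\<in>S. a j + (if j = w then d else 0))"
      using bound sum_eq finite_subset[OF _ fin(1)] by simp
  qed
qed

text \<open>By connectivity the reached set can always be extended, up to all of V.\<close>

lemma partial_certificate_exists:
  assumes fin: "finite V" "finite E'" and edges_in: "\<forall>e\<in>E'. edge e \<subseteq> V"
    and conn: "hg_connected V edge E'" and k: "1 \<le> k" "k \<le> card V"
  shows "\<exists>R a. card R = k \<and> partial_certificate V edge E' R a"
  using k
proof (induction k)
  case 0
  then show ?case by simp
next
  case (Suc k)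
  show ?case
  proof (cases "k = 0")
    case True
    obtain v where "v \<in> V" using Suc.prems fin(1) by fastforce
    moreover have "card {v} = Suc k" using True by simp
    ultimately show ?thesis
      using partial_certificate_singleton[OF fin(1)] by blast
  next
    case False
    then obtain R a where R: "card R = k" "partial_certificate V edge E' R a"
      using Suc by auto
    have "R \<subseteq> V" using R(2) unfolding partial_certificate_def by blast
    moreover have "R \<noteq> {}" "R \<noteq> V" using R(1) False Suc.prems(2) by auto
    ultimately obtain e0 where e0: "e0 \<in> E'" "edge e0 \<inter> R \<noteq> {}" "\<not> edge e0 \<subseteq> R"
      using conn hg_connected_iff_crossing[OF edges_in] by blast
    then obtain w where w: "w \<in> edge e0" "w \<notin> R" by blast
    have "w \<in> V" using w(1) e0(1) edges_in by blast
    have "card (insert w R) = Suc k"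
      using R(1) w(2) \<open>R \<subseteq> V\<close> finite_subset[OF _ fin(1)] by simp
    then show ?thesis
      using partial_certificate_extend[OF fin R(2) \<open>w \<in> V\<close> w(2) e0(1) w(1) e0(2)] by blast
  qed
qed

lemma connected_certificate:
  assumes fin: "finite V" "finite E'" "V \<noteq> {}"
    and edges: "\<forall>e\<in>E'. edge e \<noteq> {} \<and> edge e \<subseteq> V"
    and conn: "hg_connected V edge E'"
  shows "\<exists>a. sum a V = int (card E') - 1 \<and>
           (\<forall>S\<subseteq>V. S \<noteq> V \<longrightarrow> int (card {e \<in> E'. edge e \<subseteq> S}) \<le> sum a S)"
proof -
  have "1 \<le> card V" using fin by (simp add: Suc_leI card_gt_0_iff)
  then obtain R a where R: "card R = card V" "partial_certificate V edge E' R a"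
    using partial_certificate_exists[OF fin(1,2) _ conn] edges by blast
  then have "R = V"
    using card_subset_eq[OF fin(1)] unfolding partial_certificate_def by blast
  moreover have "reached edge E' V = E'" "confined edge E' V S = {e \<in> E'. edge e \<subseteq> S}" for S
    using edges unfolding reached_def confined_def by auto
  ultimately have sum_V: "sum a V = int (card E') - 1"
    and bound: "\<And>S. S \<subseteq> V \<Longrightarrow>
                  int (card {e \<in> E'. edge e \<subseteq> S}) - (if V \<subseteq> S then 1 else 0) \<le> sum a S"
    using R(2) unfolding partial_certificate_def by auto
  have "int (card {e \<in> E'. edge e \<subseteq> S}) \<le> sum a S" if "S \<subseteq> V" "S \<noteq> V" for S
    using bound[OF that(1)] that by auto
  then show ?thesis using sum_V by blast
qed

definition within :: "(nat \<Rightarrow> 'a set) \<Rightarrow> nat \<Rightarrow> nat set \<Rightarrow> 'a set" where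
  "within I n S = {e \<in> universe I n. rep_edge I n e \<subseteq> S}"

lemma rep_edge_subset: "rep_edge I n e \<subseteq> {1..n}"
  unfolding rep_edge_def by blast

lemma rep_edge_nonempty: "e \<in> universe I n \<Longrightarrow> rep_edge I n e \<noteq> {}"
  unfolding rep_edge_def universe_def by blast

lemma common_complement_eq_within:
  assumes "S \<subseteq> {1..n}" "S \<noteq> {1..n}"
  shows "(\<Inter>j\<in>{1..n} - S. compl_set I n j) = within I n S"
proof -
  obtain j0 where j0: "j0 \<in> {1..n} - S" using assms by blast
  show ?thesis
  proof (intro equalityI subsetI)
    fix e assume e: "e \<in> (\<Inter>j\<in>{1..n} - S. compl_set I n j)"
    then have "e \<in> universe I n"
      using j0 unfolding compl_set_def by blast
    moreover have "rep_edge I n e \<subseteq> S"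
      using e unfolding compl_set_def rep_edge_def by blast
    ultimately show "e \<in> within I n S"
      unfolding within_def by blast
  next
    fix e assume "e \<in> within I n S"
    then show "e \<in> (\<Inter>j\<in>{1..n} - S. compl_set I n j)"
      unfolding within_def compl_set_def rep_edge_def by blast
  qed
qed

lemma feasible_iff_within:
  "feasible I n a \<longleftrightarrow>
     (\<forall>S. S \<subseteq> {1..n} \<and> S \<noteq> {} \<and> S \<noteq> {1..n} \<longrightarrow> int (card (within I n S)) \<le> sum a S)"
  unfolding feasible_def
proof (intro iffI allI impI)
  fix S assume S: "S \<subseteq> {1..n} \<and> S \<noteq> {} \<and> S \<noteq> {1..n}"
  then have eq: "(\<Inter>j\<in>{1..n} - S. compl_set I n j) = within I n S"
    by (intro common_complement_eq_within) simp_all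
  {
    assume "\<forall>S. S \<subseteq> {1..n} \<and> S \<noteq> {} \<and> S \<noteq> {1..n} \<longrightarrow>
              int (card (\<Inter>j\<in>{1..n} - S. compl_set I n j)) \<le> sum a S"
    then show "int (card (within I n S)) \<le> sum a S"
      using S unfolding eq[symmetric] by blast
  next
    assume "\<forall>S. S \<subseteq> {1..n} \<and> S \<noteq> {} \<and> S \<noteq> {1..n} \<longrightarrow> int (card (within I n S)) \<le> sum a S"
    then show "int (card (\<Inter>j\<in>{1..n} - S. compl_set I n j)) \<le> sum a S"
      using S unfolding eq by blast
  }
qed

lemma feasible_cut_bound:
  assumes feas: "feasible I n a" and C: "C \<subseteq> {1..n}" "C \<noteq> {}" "C \<noteq> {1..n}"
  shows "int (card (within I n C)) + int (card (within I n ({1..n} - C))) \<le> sum a {1..n}"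
proof -
  have bound: "int (card (within I n S)) \<le> sum a S"
    if "S \<subseteq> {1..n}" "S \<noteq> {}" "S \<noteq> {1..n}" for S
    using feas that unfolding feasible_iff_within by blast
  have "sum a {1..n} = sum a C + sum a ({1..n} - C)"
    using C(1) by (simp add: sum.subset_diff)
  moreover have "int (card (within I n C)) \<le> sum a C"
    using bound C by blast
  moreover have "int (card (within I n ({1..n} - C))) \<le> sum a ({1..n} - C)"
    using C by (intro bound) auto
  ultimately show ?thesis by linarith
qed

text \<open>With at least two clients, the cut {1} shows that feasible vectors have nonnegative
  total weight; in particular M* is a genuine minimum bounded below.\<close>

lemma feasible_nonneg:
  assumes "n \<ge> 2" "feasible I n a"
  shows "0 \<le> sum a {1..n}"
proof -
  have "(2::nat) \<in> {1..n}"
    using assms(1) by simp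
  have "{1} \<noteq> {1..n}"
  proof
    assume "{1} = {1..n}"
    with \<open>2 \<in> {1..n}\<close> have "(2::nat) \<in> {1}" by simp
    then show False by simp
  qed
  moreover have "{1} \<subseteq> {1..n}"
    using \<open>2 \<in> {1..n}\<close> by simp
  ultimately have "int (card (within I n {1})) + int (card (within I n ({1..n} - {1}))) \<le> sum a {1..n}"
    using feasible_cut_bound[OF assms(2)] by blast
  then show ?thesis by linarith
qed

context
  fixes I :: "nat \<Rightarrow> 'a set" and n :: nat
  assumes n2: "n \<ge> 2" and fin: "\<forall>j\<in>{1..n}. finite (I j)"
begin

lemma finite_universe: "finite (universe I n)"
  unfolding universe_def using fin by blast

lemma feasible_constant: "feasible I n (\<lambda>j. int (card (universe I n)))"
  unfolding feasible_iff_within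
proof (intro allI impI)
  fix S assume S: "S \<subseteq> {1..n} \<and> S \<noteq> {} \<and> S \<noteq> {1..n}"
  then have "finite S" "S \<noteq> {}"
    using finite_subset by blast+
  then have "1 \<le> card S"
    using card_gt_0_iff[of S] by linarith
  have "card (within I n S) \<le> card (universe I n)"
    using finite_universe unfolding within_def by (intro card_mono) auto
  also have "\<dots> \<le> card S * card (universe I n)"
    using \<open>1 \<le> card S\<close> by simp
  finally show "int (card (within I n S)) \<le> (\<Sum>j\<in>S. int (card (universe I n)))"
    by (simp add: of_nat_mult[symmetric] del: of_nat_mult)
qed

lemma Mstar_le:
  assumes "feasible I n a"
  shows "Mstar I n \<le> sum a {1..n}"
proof -
  have "bdd_below {sum b {1..n} | b. feasible I n b}"
    using feasible_nonneg[OF n2] by (intro bdd_belowI[of _ 0]) blast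
  then show ?thesis
    unfolding Mstar_def using assms by (intro cInf_lower) auto
qed

lemma Mstar_ge: "(\<And>a. feasible I n a \<Longrightarrow> c \<le> sum a {1..n}) \<Longrightarrow> c \<le> Mstar I n"
  unfolding Mstar_def using feasible_constant
  by (intro cInf_greatest) auto

text \<open>Consequently M* >= 0, which is used to see that U is nonempty when M* < |U|.\<close>

lemma Mstar_nonneg: "0 \<le> Mstar I n"
  by (rule Mstar_ge) (rule feasible_nonneg[OF n2])

lemma Mstar_lt_if_connected:
  assumes "hg_connected {1..n} (rep_edge I n) (universe I n)"
  shows "Mstar I n < int (card (universe I n))"
proof -
  have "{1..n} \<noteq> {}" using n2 by simp
  moreover have "\<forall>e\<in>universe I n. rep_edge I n e \<noteq> {} \<and> rep_edge I n e \<subseteq> {1..n}"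
    using rep_edge_nonempty rep_edge_subset by (intro ballI conjI)
  ultimately obtain a where a: "sum a {1..n} = int (card (universe I n)) - 1"
    "\<forall>S\<subseteq>{1..n}. S \<noteq> {1..n} \<longrightarrow> int (card (within I n S)) \<le> sum a S"
    using connected_certificate[OF finite_atLeastAtMost finite_universe _ _ assms]
    unfolding within_def by blast
  then have "feasible I n a"
    unfolding feasible_iff_within by blast
  then show ?thesis
    using Mstar_le a(1) by (smt (verit))
qed

text \<open>Part 1, disconnected case: a cut crossed by no message forces a([n]) >= |U|.\<close>

lemma Mstar_ge_if_disconnected:
  assumes "\<not> hg_connected {1..n} (rep_edge I n) (universe I n)"
  shows "int (card (universe I n)) \<le> Mstar I n"
proof -
  have "\<forall>e\<in>universe I n. rep_edge I n e \<subseteq> {1..n}"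
    by (intro ballI rep_edge_subset)
  with assms have "\<not> (\<forall>C. C \<subseteq> {1..n} \<and> C \<noteq> {} \<and> C \<noteq> {1..n} \<longrightarrow>
      (\<exists>e\<in>universe I n. rep_edge I n e \<inter> C \<noteq> {} \<and> \<not> rep_edge I n e \<subseteq> C))"
    using hg_connected_iff_crossing by metis
  then obtain C where C: "C \<subseteq> {1..n}" "C \<noteq> {}" "C \<noteq> {1..n}"
    and no_cross: "\<forall>e\<in>universe I n. \<not> (rep_edge I n e \<inter> C \<noteq> {} \<and> \<not> rep_edge I n e \<subseteq> C)"
    by blast
  have "universe I n \<subseteq> within I n C \<union> within I n ({1..n} - C)"
  proof
    fix e assume e: "e \<in> universe I n"
    have "rep_edge I n e \<subseteq> C \<or> rep_edge I n e \<subseteq> {1..n} - C"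
      using no_cross e rep_edge_subset[of I n e] by blast
    then show "e \<in> within I n C \<union> within I n ({1..n} - C)"
      using e unfolding within_def by blast
  qed
  then have "card (universe I n) \<le> card (within I n C \<union> within I n ({1..n} - C))"
    using finite_universe unfolding within_def by (intro card_mono) auto
  also have "\<dots> \<le> card (within I n C) + card (within I n ({1..n} - C))"
    by (rule card_Un_le)
  finally have cover: "int (card (universe I n))
      \<le> int (card (within I n C)) + int (card (within I n ({1..n} - C)))"
    by linarith
  show ?thesis
  proof (rule Mstar_ge)
    fix a assume "feasible I n a"
    then show "int (card (universe I n)) \<le> sum a {1..n}"
      using feasible_cut_bound[OF _ C] cover by (meson order_trans)
  qed
qed

lemma connected_iff_Mstar_lt:
  "hg_connected {1..n} (rep_edge I n) (universe I n) \<longleftrightarrow> Mstar I n < int (card (universe I n))"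
  using Mstar_lt_if_connected Mstar_ge_if_disconnected by (meson not_le)

end

lemma universe_remove: "universe (\<lambda>j. I j - {i}) n = universe I n - {i}"
  unfolding universe_def by blast

lemma hg_connected_remove:
  "hg_connected V (rep_edge (\<lambda>j. I j - {i}) n) (universe (\<lambda>j. I j - {i}) n)
   \<longleftrightarrow> hg_connected V (rep_edge I n) (universe I n - {i})"
proof -
  have "hg_adj V (rep_edge (\<lambda>j. I j - {i}) n) (universe (\<lambda>j. I j - {i}) n)
      = hg_adj V (rep_edge I n) (universe I n - {i})"
    unfolding hg_adj_def universe_remove unfolding rep_edge_def by blast
  then show ?thesis
    unfolding hg_connected_adj by simp
qed

lemma feasible_remove:
  assumes fin: "finite (universe I n)" and feas: "feasible I n a"
  shows "feasible (\<lambda>j. I j - {i}) n a"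
  unfolding feasible_iff_within
proof (intro allI impI)
  fix S assume S: "S \<subseteq> {1..n} \<and> S \<noteq> {} \<and> S \<noteq> {1..n}"
  have "within (\<lambda>j. I j - {i}) n S \<subseteq> within I n S"
    unfolding within_def universe_remove unfolding rep_edge_def by blast
  then have "card (within (\<lambda>j. I j - {i}) n S) \<le> card (within I n S)"
    using fin unfolding within_def by (intro card_mono) simp_all
  moreover have "int (card (within I n S)) \<le> sum a S"
    using feas S unfolding feasible_iff_within by blast
  ultimately show "int (card (within (\<lambda>j. I j - {i}) n S)) \<le> sum a S"
    by linarith
qed

context
  fixes I :: "nat \<Rightarrow> 'a set" and n :: nat
  assumes n2: "n \<ge> 2" and fin: "\<forall>j\<in>{1..n}. finite (I j)"
begin

lemma Mstar_remove_le: "Mstar (\<lambda>j. I j - {i}) n \<le> Mstar I n"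
proof (rule Mstar_ge[OF n2 fin])
  have fin_rm: "\<forall>j\<in>{1..n}. finite (I j - {i})"
    using fin by blast
  fix a assume "feasible I n a"
  then have "feasible (\<lambda>j. I j - {i}) n a"
    by (rule feasible_remove[OF finite_universe[OF n2 fin]])
  then show "Mstar (\<lambda>j. I j - {i}) n \<le> sum a {1..n}"
    by (rule Mstar_le[OF n2 fin_rm])
qed

lemma connected_remove_iff_Mstar_lt:
  assumes "i \<in> universe I n"
  shows "hg_connected {1..n} (rep_edge I n) (universe I n - {i})
         \<longleftrightarrow> Mstar (\<lambda>j. I j - {i}) n < int (card (universe I n)) - 1"
proof -
  have "Suc (card (universe I n - {i})) = card (universe I n)"
    by (rule card_Suc_Diff1[OF finite_universe[OF n2 fin] assms])
  then have card_eq: "int (card (universe I n - {i})) = int (card (universe I n)) - 1"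
    by (simp flip: \<open>Suc _ = _\<close>)
  have "\<forall>j\<in>{1..n}. finite (I j - {i})"
    using fin by blast
  then have "hg_connected {1..n} (rep_edge (\<lambda>j. I j - {i}) n) (universe (\<lambda>j. I j - {i}) n)
      \<longleftrightarrow> Mstar (\<lambda>j. I j - {i}) n < int (card (universe (\<lambda>j. I j - {i}) n))"
    by (rule connected_iff_Mstar_lt[OF n2])
  then show ?thesis
    unfolding hg_connected_remove unfolding universe_remove card_eq .
qed

lemma one_critical_iff_minimal:
  "one_critical I n \<longleftrightarrow>
     min_conn_dom_edge_set {1..n} (rep_edge I n) (universe I n) (universe I n)"
proof -
  let ?U = "universe I n" and ?M = "Mstar I n"
  let ?M_rm = "\<lambda>i. Mstar (\<lambda>j. I j - {i}) n"
  have conn_iff: "hg_connected {1..n} (rep_edge I n) ?U \<longleftrightarrow> ?M < int (card ?U)"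
    by (rule connected_iff_Mstar_lt[OF n2 fin])
  have cut_iff: "\<not> hg_connected {1..n} (rep_edge I n) (?U - {i}) \<longleftrightarrow> int (card ?U) - 1 \<le> ?M_rm i"
    if "i \<in> ?U" for i
    using connected_remove_iff_Mstar_lt[OF that] by linarith
  show ?thesis
    unfolding min_conn_dom_edge_set_def
  proof (intro iffI conjI ballI subset_refl)
    assume "one_critical I n"
    then have M_eq: "?M = int (card ?U) - 1" and crit: "\<And>i. i \<in> ?U \<Longrightarrow> ?M_rm i = ?M"
      unfolding one_critical_def by auto
    show "hg_connected {1..n} (rep_edge I n) ?U"
      using conn_iff M_eq by linarith
    fix i assume "i \<in> ?U"
    then show "\<not> hg_connected {1..n} (rep_edge I n) (?U - {i})"
      using cut_iff crit M_eq by simp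
  next
    assume min: "?U \<subseteq> ?U \<and> hg_connected {1..n} (rep_edge I n) ?U \<and>
      (\<forall>i\<in>?U. \<not> hg_connected {1..n} (rep_edge I n) (?U - {i}))"
    then have lt: "?M < int (card ?U)"
      using conn_iff by blast
    have ge: "int (card ?U) - 1 \<le> ?M_rm i" if "i \<in> ?U" for i
      using min that cut_iff by blast
    have "?U \<noteq> {}"
      using lt Mstar_nonneg[OF n2 fin] by auto
    then obtain i0 where "i0 \<in> ?U"
      by blast
    then have M_eq: "?M = int (card ?U) - 1"
      using ge[of i0] lt Mstar_remove_le[of i0] by linarith
    have "?M_rm i = ?M" if "i \<in> ?U" for i
      using M_eq ge[OF that] Mstar_remove_le[of i] by linarith
    then show "one_critical I n"
      unfolding one_critical_def using M_eq by simp
  qed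
qed

end

theorem lemma4:
  fixes I :: "nat \<Rightarrow> 'a set" and n :: nat
  assumes "n \<ge> 2"
    and "\<forall>j\<in>{1..n}. finite (I j)"
  shows "(hg_connected {1..n} (rep_edge I n) (universe I n)
            \<longleftrightarrow> Mstar I n < int (card (universe I n)))
       \<and> (one_critical I n
            \<longleftrightarrow> min_conn_dom_edge_set {1..n} (rep_edge I n) (universe I n) (universe I n))"
  using connected_iff_Mstar_lt[OF assms] one_critical_iff_minimal[OF assms] by (rule conjI)

end
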